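(* Let $H$ satisfy (C3), (CNH), (CVX). Fix $T>0$ and a Lipschitz $W:\mathbb{R}\to\mathbb{R}$ with $I^{HJ}_T(W)\ne\emptyset$. Then for every $U_o\in I^{HJ}_T(W)$ and every $x\in\mathbb{R}$, $U_o(x)\ge U_o^*(x)$, where $U_o^*(x)=\sup\{W(q(T))-\int_0^TL(q(s),\dot q(s))\,ds:\ q\in\mathcal{R}_T,\ q(0)=x\}$.
   Context: (C3) $H\in C^3(\mathbb{R}^2;\mathbb{R})$; (CNH) there exists $X>0$ with $\partial_xH(x,p)=0$ whenever $|x|\ge X$; (CVX) for each $x$, $p\mapsto\partial_pH(x,p)$ is an increasing $C^1$-diffeomorphism of $\mathbb{R}$ onto itself. $L(x,v)=\sup_p(pv-H(x,p))$. $\mathcal{R}_T$: the $q\in C^1([0,T])$ such that some $p\in C^1([0,T])$ makes $(q,p)$ solve $\dot q=\partial_pH(q,p)$, $\dot p=-\partial_xH(q,p)$. $I^{HJ}_T(W)$: the set of Lipschitz $U_o$ such that the viscosity (Crandall–Lions) solution of $\partial_tU+H(x,\partial_xU)=0$, $U(0)=U_o$, equals $W$ at time $T$. *)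

theory Defs
  imports "HOL-Analysis.Analysis"
begin

definition pd1 :: "(real \<Rightarrow> real \<Rightarrow> real) \<Rightarrow> real \<Rightarrow> real \<Rightarrow> real" where
  "pd1 f x p = deriv (\<lambda>y. f y p) x"

definition pd2 :: "(real \<Rightarrow> real \<Rightarrow> real) \<Rightarrow> real \<Rightarrow> real \<Rightarrow> real" where
  "pd2 f x p = deriv (\<lambda>q. f x q) p"

fun Ck2 :: "nat \<Rightarrow> (real \<Rightarrow> real \<Rightarrow> real) \<Rightarrow> bool" where
  "Ck2 0 f = continuous_on UNIV (\<lambda>(x, p). f x p)"
| "Ck2 (Suc n) f =
     ((\<forall>x p. (\<lambda>y. f y p) differentiable (at x) \<and> (\<lambda>q. f x q) differentiable (at p))
      \<and> Ck2 n (pd1 f) \<and> Ck2 n (pd2 f) \<and> continuous_on UNIV (\<lambda>(x, p). f x p))"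

definition C3 :: "(real \<Rightarrow> real \<Rightarrow> real) \<Rightarrow> bool" where
  "C3 H \<longleftrightarrow> Ck2 3 H"

definition CNH :: "(real \<Rightarrow> real \<Rightarrow> real) \<Rightarrow> bool" where
  "CNH H \<longleftrightarrow> (\<exists>X>0. \<forall>x p. \<bar>x\<bar> \<ge> X \<longrightarrow> pd1 H x p = 0)"

definition C1_real :: "(real \<Rightarrow> real) \<Rightarrow> bool" where
  "C1_real g \<longleftrightarrow> (\<forall>y. g differentiable (at y)) \<and> continuous_on UNIV (deriv g)"

definition CVX :: "(real \<Rightarrow> real \<Rightarrow> real) \<Rightarrow> bool" where
  "CVX H \<longleftrightarrow> (\<forall>x. let g = (\<lambda>p. pd2 H x p) in
       mono g \<and> bij g \<and> C1_real g \<and> C1_real (inv g))"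

definition Lag :: "(real \<Rightarrow> real \<Rightarrow> real) \<Rightarrow> real \<Rightarrow> real \<Rightarrow> real" where
  "Lag H x v = (SUP p. p * v - H x p)"

definition C1_on :: "real \<Rightarrow> (real \<Rightarrow> real) \<Rightarrow> bool" where
  "C1_on T q \<longleftrightarrow> (\<exists>q'. (\<forall>t\<in>{0..T}. (q has_real_derivative q' t) (at t within {0..T}))
                      \<and> continuous_on {0..T} q')"

definition RT :: "(real \<Rightarrow> real \<Rightarrow> real) \<Rightarrow> real \<Rightarrow> (real \<Rightarrow> real) set" where
  "RT H T = {q. C1_on T q \<and> (\<exists>p. C1_on T p \<and>
      (\<forall>t\<in>{0..T}. (q has_real_derivative pd2 H (q t) (p t)) (at t within {0..T})
                 \<and> (p has_real_derivative - pd1 H (q t) (p t)) (at t within {0..T})))}"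

definition action :: "(real \<Rightarrow> real \<Rightarrow> real) \<Rightarrow> real \<Rightarrow> (real \<Rightarrow> real) \<Rightarrow> real" where
  "action H T q = integral {0..T} (\<lambda>s. Lag H (q s) (vector_derivative q (at s within {0..T})))"

text \<open>U_o^*(x), as an extended real supremum (so no convention for unbounded sets is needed).\<close>
definition Ustar :: "(real \<Rightarrow> real \<Rightarrow> real) \<Rightarrow> real \<Rightarrow> (real \<Rightarrow> real) \<Rightarrow> real \<Rightarrow> ereal" where
  "Ustar H T W x = (SUP q\<in>{q\<in>RT H T. q 0 = x}. ereal (W (q T) - action H T q))"

definition C1_test :: "(real \<Rightarrow> real \<Rightarrow> real) \<Rightarrow> (real \<Rightarrow> real \<Rightarrow> real) \<Rightarrow> (real \<Rightarrow> real \<Rightarrow> real) \<Rightarrow> bool" where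
  "C1_test \<phi> \<phi>t \<phi>x \<longleftrightarrow>
     (\<forall>t x. ((\<lambda>(s, y). \<phi> s y) has_derivative (\<lambda>(ds, dy). \<phi>t t x * ds + \<phi>x t x * dy)) (at (t, x)))
     \<and> continuous_on UNIV (\<lambda>(t, x). \<phi>t t x) \<and> continuous_on UNIV (\<lambda>(t, x). \<phi>x t x)"

definition visc_sub :: "(real \<Rightarrow> real \<Rightarrow> real) \<Rightarrow> real \<Rightarrow> (real \<Rightarrow> real \<Rightarrow> real) \<Rightarrow> bool" where
  "visc_sub H T U \<longleftrightarrow> (\<forall>\<phi> \<phi>t \<phi>x t x. C1_test \<phi> \<phi>t \<phi>x \<and> t \<in> {0<..<T} \<and>
      (\<exists>e>0. \<forall>s y. dist (s, y) (t, x) < e \<longrightarrow> U s y - \<phi> s y \<le> U t x - \<phi> t x)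
      \<longrightarrow> \<phi>t t x + H x (\<phi>x t x) \<le> 0)"

definition visc_super :: "(real \<Rightarrow> real \<Rightarrow> real) \<Rightarrow> real \<Rightarrow> (real \<Rightarrow> real \<Rightarrow> real) \<Rightarrow> bool" where
  "visc_super H T U \<longleftrightarrow> (\<forall>\<phi> \<phi>t \<phi>x t x. C1_test \<phi> \<phi>t \<phi>x \<and> t \<in> {0<..<T} \<and>
      (\<exists>e>0. \<forall>s y. dist (s, y) (t, x) < e \<longrightarrow> U s y - \<phi> s y \<ge> U t x - \<phi> t x)
      \<longrightarrow> \<phi>t t x + H x (\<phi>x t x) \<ge> 0)"

text \<open>U (as a function of time t and space x) is a viscosity solution on [0,T] x R,
  in the uniqueness class of Lipschitz functions on [0,T] x R.\<close>
definition visc_sol :: "(real \<Rightarrow> real \<Rightarrow> real) \<Rightarrow> real \<Rightarrow> (real \<Rightarrow> real \<Rightarrow> real) \<Rightarrow> bool" where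
  "visc_sol H T U \<longleftrightarrow> (\<exists>C. C-lipschitz_on ({0..T} \<times> UNIV) (\<lambda>(t, x). U t x))
     \<and> visc_sub H T U \<and> visc_super H T U"

definition IHJ :: "(real \<Rightarrow> real \<Rightarrow> real) \<Rightarrow> real \<Rightarrow> (real \<Rightarrow> real) \<Rightarrow> (real \<Rightarrow> real) set" where
  "IHJ H T W = {Uo. (\<exists>C. C-lipschitz_on UNIV Uo) \<and>
      (\<exists>U. visc_sol H T U \<and> U 0 = Uo \<and> U T = W)}"

end

theory Submission
  imports Defs
begin

text \<open>Let q be a Hamiltonian trajectory with momentum p. Convexity of H(x, \<cdot>) gives
  L(q, q') = p q' - H(q, p) and the tangent inequality \<pi> q' - H(q, \<pi>) \<le> L(q, q') for every \<pi>.
  For a Lipschitz viscosity subsolution U this keeps U(t, q t) - A t below its value at t = 0,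
  where A t is the integral of L(q, q') over [0, t]: if it were larger at some b, then U(s, y) - A s, minus
  k (y - q s)^2 and minus a steep exponential barrier h vanishing at b, would attain an interior
  maximum, where the subsolution inequality together with the tangent inequality leaves only
  h' \<le> C M / k, with M a bound for the x-derivative of H; this fails for large k.
  At t = T this reads W(q T) - action \<le> U(0, q 0). Only the subsolution half of the viscosity
  property and the C1 part of (C3) are needed.\<close>

lemma has_real_derivative_within_Un:
  assumes "(f has_real_derivative D) (at x within S)" "(f has_real_derivative D) (at x within T)"
  shows "(f has_real_derivative D) (at x within (S \<union> T))"
  using assms Lim_Un unfolding has_field_derivative_iff by blast

lemma has_real_derivative_within_closedI:
  assumes "closed S" "x \<in> S \<Longrightarrow> (f has_real_derivative D) (at x within S)"
  shows "(f has_real_derivative D) (at x within S)"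
proof (cases "x \<in> S")
  case False
  then have "at x within S = bot"
    using assms(1) closure_mono[of "S - {x}" S] by (auto simp: at_within_eq_bot_iff)
  then show ?thesis by (simp add: has_field_derivative_iff)
qed (use assms in auto)

lemma has_real_derivative_transform_on:
  assumes "(f has_real_derivative D) (at x within S)" "x \<in> S" "\<And>y. y \<in> S \<Longrightarrow> f y = g y"
  shows "(g has_real_derivative D) (at x within S)"
  using has_field_derivative_transform_within[OF assms(1) zero_less_one assms(2)] assms(3) by blast

lemma C1_extension_from_interval:
  fixes f f' :: "real \<Rightarrow> real"
  assumes "T \<ge> 0"
    and f: "\<And>t. t \<in> {0..T} \<Longrightarrow> (f has_real_derivative f' t) (at t within {0..T})"
    and f'_cont: "continuous_on {0..T} f'"
  obtains F F' where "\<And>t. (F has_real_derivative F' t) (at t)" "continuous_on UNIV F'"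
    "\<And>t. t \<in> {0..T} \<Longrightarrow> F t = f t \<and> F' t = f' t"
proof -
  define c where "c t = max 0 (min T t)" for t
  define F where "F t = f (c t) + f' (c t) * (t - c t)" for t
  define F' where "F' t = f' (c t)" for t
  have c_left: "c t = 0" if "t \<le> 0" for t using that assms(1) by (simp add: c_def)
  have c_middle: "c t = t" if "t \<in> {0..T}" for t using that by (simp add: c_def)
  have c_right: "c t = T" if "t \<ge> T" for t using that assms(1) by (simp add: c_def)
  have "continuous_on UNIV F'"
    unfolding F'_def c_def
    by (rule continuous_on_compose2[OF f'_cont]) (use assms(1) in \<open>auto intro!: continuous_intros\<close>)
  moreover have on_interval: "F t = f t \<and> F' t = f' t" if "t \<in> {0..T}" for t
    using c_middle[OF that] by (simp add: F_def F'_def)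
  moreover have "(F has_real_derivative F' t) (at t)" for t
  proof -
    have "(F has_real_derivative F' t) (at t within {..0})"
    proof (rule has_real_derivative_within_closedI)
      assume t: "t \<in> {..0}"
      have "((\<lambda>s. f 0 + f' 0 * s) has_real_derivative f' 0) (at t within {..0})"
        by (auto intro!: derivative_eq_intros)
      then show ?thesis
        by (rule has_real_derivative_transform_on[THEN DERIV_cong])
          (use t c_left in \<open>auto simp: F_def F'_def\<close>)
    qed simp
    moreover have "(F has_real_derivative F' t) (at t within {0..T})"
    proof (rule has_real_derivative_within_closedI)
      assume t: "t \<in> {0..T}"
      show ?thesis
        by (rule has_real_derivative_transform_on[OF f[OF t], THEN DERIV_cong])
          (use t on_interval in auto)
    qed simp
    moreover have "(F has_real_derivative F' t) (at t within {T..})"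
    proof (rule has_real_derivative_within_closedI)
      assume t: "t \<in> {T..}"
      have "((\<lambda>s. f T + f' T * (s - T)) has_real_derivative f' T) (at t within {T..})"
        by (auto intro!: derivative_eq_intros)
      then show ?thesis
        by (rule has_real_derivative_transform_on[THEN DERIV_cong])
          (use t c_right in \<open>auto simp: F_def F'_def\<close>)
    qed simp
    moreover have "{..0} \<union> {0..T} \<union> {T..} = (UNIV :: real set)" by auto
    ultimately show ?thesis
      by (metis has_real_derivative_within_Un)
  qed
  ultimately show ?thesis using that by blast
qed

lemma mono_derivative_above_tangent:
  fixes G g :: "real \<Rightarrow> real"
  assumes "\<And>p. (G has_real_derivative g p) (at p)" "mono g"
  shows "G P + g P * (p - P) \<le> G p"
proof -
  have "convex_on UNIV G"
    using assms by (intro convex_on_realI[where f' = g]) (auto simp: mono_def)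
  then show ?thesis
    using convex_on_imp_above_tangent[of UNIV G P p "g P"] assms(1) by (simp add: algebra_simps)
qed

lemma young_quadratic:
  fixes C r k :: real
  assumes "k > 0"
  shows "C * r - r\<^sup>2 * k \<le> C\<^sup>2 / (4 * k)"
proof -
  have "0 \<le> (2 * k * r - C)\<^sup>2 / (4 * k)" using assms by simp
  also have "\<dots> = r\<^sup>2 * k - C * r + C\<^sup>2 / (4 * k)"
    using assms by (simp add: field_simps power2_eq_square)
  finally show ?thesis by simp
qed

lemma exponential_barrier:
  fixes \<eta> b T c :: real
  assumes "\<eta> > 0" "b < T"
  obtains h h' \<mu> where "\<And>t. (h has_real_derivative h' t) (at t)" "continuous_on UNIV h'"
    "h b = 0" "\<And>t. - \<eta> \<le> h t" "c \<le> h T" "\<mu> > 0" "\<And>t. 0 \<le> t \<Longrightarrow> \<mu> \<le> h' t"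
proof -
  define K where "K = (\<bar>c\<bar> + 1) / (\<eta> * (T - b))"
  have K: "K > 0" using assms by (simp add: K_def)
  define h where "h t = \<eta> * (exp (K * (t - b)) - 1)" for t
  define h' where "h' t = \<eta> * K * exp (K * (t - b))" for t
  have "(h has_real_derivative h' t) (at t)" for t
    unfolding h_def h'_def by (auto intro!: derivative_eq_intros)
  moreover have "continuous_on UNIV h'" unfolding h'_def by (intro continuous_intros)
  moreover have "- \<eta> \<le> h t" for t using assms(1) by (simp add: h_def right_diff_distrib)
  moreover have "c \<le> h T"
  proof -
    have "\<eta> * (K * (T - b)) \<le> h T"
      unfolding h_def using assms(1) exp_ge_add_one_self[of "K * (T - b)"]
      by (intro mult_left_mono) linarith+
    moreover have "\<eta> * (K * (T - b)) = \<bar>c\<bar> + 1" using assms by (simp add: K_def)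
    ultimately show ?thesis by linarith
  qed
  moreover have "\<eta> * K * exp (- (K * b)) \<le> h' t" if "0 \<le> t" for t
    unfolding h'_def using assms(1) K that by (simp add: algebra_simps)
  ultimately show ?thesis
    using that[of h h' "\<eta> * K * exp (- (K * b))"] assms(1) K by (simp add: h_def)
qed

lemma penalty_weight_exists:
  fixes C M m \<mu> :: real
  assumes "0 \<le> C" "0 \<le> M" "0 < m" "0 < \<mu>"
  obtains k where "1 \<le> k" "C\<^sup>2 / (4 * k) < m / 2" "M * C < \<mu> * k"
proof
  define k where "k = 1 + C\<^sup>2 / m + M * C / \<mu>"
  have MC: "0 \<le> M * C / \<mu>" using assms by simp
  then show k: "1 \<le> k" using assms(3) by (simp add: k_def)
  have "k * m = m + C\<^sup>2 + M * C / \<mu> * m" using assms(3) by (simp add: k_def algebra_simps)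
  moreover have "0 \<le> M * C / \<mu> * m" using MC assms(3) by (intro mult_nonneg_nonneg) auto
  ultimately have "C\<^sup>2 < k * m" using assms(3) by linarith
  then have "C\<^sup>2 / (4 * k) < k * m / (4 * k)" using k by (intro divide_strict_right_mono) auto
  also have "\<dots> < m / 2" using k assms(3) by simp
  finally show "C\<^sup>2 / (4 * k) < m / 2" .
  have "\<mu> * k = \<mu> + \<mu> * (C\<^sup>2 / m) + M * C" using assms(4) by (simp add: k_def algebra_simps)
  moreover have "0 \<le> \<mu> * (C\<^sup>2 / m)" using assms(3,4) by simp
  ultimately show "M * C < \<mu> * k" using assms(4) by linarith
qed

lemma Ck2_Suc_imp: "Ck2 (Suc n) f \<Longrightarrow> Ck2 n f"
proof (induction n arbitrary: f)
  case 0
  then show ?case unfolding Ck2.simps(2) by (simp only: Ck2.simps(1))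
next
  case (Suc n)
  then show ?case unfolding Ck2.simps(2)[of "Suc n"] Ck2.simps(2)[of n] by blast
qed

lemma C3_imp_Ck2_1: "C3 H \<Longrightarrow> Ck2 1 H"
  unfolding C3_def numeral_3_eq_3 One_nat_def by (rule Ck2_Suc_imp[OF Ck2_Suc_imp])

lemma Ck2_1_partials:
  assumes "Ck2 1 H"
  shows Ck2_1_continuous: "continuous_on UNIV (\<lambda>(x, p). H x p)"
    and Ck2_1_pd1_continuous: "continuous_on UNIV (\<lambda>(x, p). pd1 H x p)"
    and Ck2_1_pd2_continuous: "continuous_on UNIV (\<lambda>(x, p). pd2 H x p)"
    and Ck2_1_has_pd1: "\<And>x p. ((\<lambda>y. H y p) has_real_derivative pd1 H x p) (at x)"
    and Ck2_1_has_pd2: "\<And>x p. ((\<lambda>q. H x q) has_real_derivative pd2 H x p) (at p)"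
proof -
  have diff: "\<forall>x p. (\<lambda>y. H y p) differentiable (at x) \<and> (\<lambda>q. H x q) differentiable (at p)"
    and "continuous_on UNIV (\<lambda>(x, p). H x p)" "continuous_on UNIV (\<lambda>(x, p). pd1 H x p)"
    "continuous_on UNIV (\<lambda>(x, p). pd2 H x p)"
    using assms unfolding One_nat_def Ck2.simps by blast+
  then show "continuous_on UNIV (\<lambda>(x, p). H x p)" "continuous_on UNIV (\<lambda>(x, p). pd1 H x p)"
    "continuous_on UNIV (\<lambda>(x, p). pd2 H x p)"
    by simp_all
  show "((\<lambda>y. H y p) has_real_derivative pd1 H x p) (at x)"
    "((\<lambda>q. H x q) has_real_derivative pd2 H x p) (at p)" for x p
    using diff unfolding pd1_def pd2_def by (simp_all add: DERIV_deriv_iff_real_differentiable)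
qed

lemma lipschitz_in_x_of_bounded_pd1:
  assumes "Ck2 1 H" and bound: "\<And>z. z \<in> {a..b} \<Longrightarrow> \<bar>pd1 H z p\<bar> \<le> M"
    and "x \<in> {a..b}" "y \<in> {a..b}"
  shows "\<bar>H y p - H x p\<bar> \<le> M * \<bar>y - x\<bar>"
  using field_differentiable_bound[of "{a..b}" "\<lambda>z. H z p" "\<lambda>z. pd1 H z p" M y x]
    has_field_derivative_at_within[OF Ck2_1_has_pd1[OF assms(1)]] assms(2-)
  by simp

lemma Hamiltonian_above_tangent:
  assumes "Ck2 1 H" "mono (pd2 H x)"
  shows "H x P + pd2 H x P * (p - P) \<le> H x p"
  by (rule mono_derivative_above_tangent[OF Ck2_1_has_pd2[OF assms(1)] assms(2)])

lemma Lag_pd2: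
  assumes "Ck2 1 H" "mono (pd2 H x)"
  shows "Lag H x (pd2 H x P) = P * pd2 H x P - H x P"
proof -
  have "p * pd2 H x P - H x p \<le> P * pd2 H x P - H x P" for p
    using Hamiltonian_above_tangent[OF assms, of P p] by (simp add: algebra_simps)
  then show ?thesis
    unfolding Lag_def by (intro cSup_eq_maximum) auto
qed

lemma continuous_on_comp_fst:
  "continuous_on UNIV F \<Longrightarrow> continuous_on S (\<lambda>z::real \<times> real. F (fst z))"
  by (rule continuous_on_compose2[of UNIV F S fst]) (auto intro: continuous_intros)

lemma C1_test_quadratic_penalty:
  fixes A A' Q Q' h h' :: "real \<Rightarrow> real" and k :: real
  assumes dA: "\<And>t. (A has_real_derivative A' t) (at t)"
    and dQ: "\<And>t. (Q has_real_derivative Q' t) (at t)"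
    and dh: "\<And>t. (h has_real_derivative h' t) (at t)"
    and "continuous_on UNIV A'" "continuous_on UNIV Q'" "continuous_on UNIV h'"
  shows "C1_test (\<lambda>s y. A s + (y - Q s)\<^sup>2 * k + h s)
      (\<lambda>s y. A' s - 2 * (y - Q s) * Q' s * k + h' s) (\<lambda>s y. 2 * (y - Q s) * k)"
proof -
  have "continuous_on UNIV Q" using dQ by (intro DERIV_continuous_on) auto
  have comp_fst: "((\<lambda>z::real \<times> real. F (fst z)) has_derivative (\<lambda>z. F' (fst w) * fst z)) (at w)"
    if "\<And>t. (F has_real_derivative F' t) (at t)" for F F' w
    using has_derivative_compose[OF has_derivative_fst[OF has_derivative_ident]
        has_field_derivative_imp_has_derivative[OF that]]
    by (simp add: mult.commute)
  have "((\<lambda>z::real \<times> real. A (fst z) + (snd z - Q (fst z))\<^sup>2 * k + h (fst z)) has_derivative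
        (\<lambda>z. A' (fst w) * fst z + (2 * (snd w - Q (fst w)) * (snd z - Q' (fst w) * fst z)) * k
          + h' (fst w) * fst z)) (at w)" for w
    by (auto intro!: derivative_eq_intros comp_fst[OF dA] comp_fst[OF dQ] comp_fst[OF dh]
        simp: power2_eq_square algebra_simps)
  then have "((\<lambda>(s, y). A s + (y - Q s)\<^sup>2 * k + h s) has_derivative
       (\<lambda>(ds, dy). (A' t - 2 * (x - Q t) * Q' t * k + h' t) * ds + 2 * (x - Q t) * k * dy)) (at (t, x))"
    for t x
    unfolding case_prod_unfold
    by (rule has_derivative_eq_rhs) (auto simp: fun_eq_iff algebra_simps)
  moreover have "continuous_on UNIV (\<lambda>(t, x). A' t - 2 * (x - Q t) * Q' t * k + h' t)"
    "continuous_on UNIV (\<lambda>(t, x). 2 * (x - Q t) * k)"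
    unfolding case_prod_unfold
    by (intro continuous_intros continuous_on_comp_fst assms \<open>continuous_on UNIV Q\<close>)+
  ultimately show ?thesis unfolding C1_test_def by auto
qed

text \<open>Q and A are C1 extensions to all of \<real> of a trajectory with momentum P and of its action
  primitive t \<mapsto> \<integral> L over [0, t]; they are needed because the test functions of visc_sub live on the
  whole plane.\<close>

locale subsolution_along_characteristic =
  fixes H :: "real \<Rightarrow> real \<Rightarrow> real" and T C :: real and U :: "real \<Rightarrow> real \<Rightarrow> real"
    and Q Q' A A' P :: "real \<Rightarrow> real"
  assumes C1: "Ck2 1 H" and mono: "\<And>x. mono (pd2 H x)" and T: "T > 0"
    and lipschitz: "C-lipschitz_on ({0..T} \<times> UNIV) (\<lambda>(t, x). U t x)"
    and sub: "visc_sub H T U"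
    and Q_deriv: "\<And>t. (Q has_real_derivative Q' t) (at t)" and Q'_cont: "continuous_on UNIV Q'"
    and A_deriv: "\<And>t. (A has_real_derivative A' t) (at t)" and A'_cont: "continuous_on UNIV A'"
    and Q'_eq: "\<And>t. t \<in> {0..T} \<Longrightarrow> Q' t = pd2 H (Q t) (P t)"
    and A'_eq: "\<And>t. t \<in> {0..T} \<Longrightarrow> A' t = P t * Q' t - H (Q t) (P t)"
begin

definition value_along :: "real \<Rightarrow> real" where
  "value_along t = U t (Q t) - A t"

definition penalized :: "real \<Rightarrow> (real \<Rightarrow> real) \<Rightarrow> real \<Rightarrow> real \<Rightarrow> real" where
  "penalized k h s y = U s y - A s - (y - Q s)\<^sup>2 * k - h s"

lemma C_nonneg: "C \<ge> 0"
  using lipschitz by (auto simp: lipschitz_on_def)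

lemma U_lipschitz_in_x: "t \<in> {0..T} \<Longrightarrow> U t y - U t y' \<le> C * \<bar>y - y'\<bar>"
  using lipschitz_onD[OF lipschitz, of "(t, y)" "(t, y')"] by (simp add: dist_Pair_Pair dist_real_def)

lemma Q_continuous: "continuous_on S Q"
  using Q_deriv by (meson DERIV_continuous_on has_field_derivative_at_within)

lemma A_continuous: "continuous_on S A"
  using A_deriv by (meson DERIV_continuous_on has_field_derivative_at_within)

lemma continuous_on_penalized:
  assumes "continuous_on UNIV h"
  shows "continuous_on ({0..T} \<times> UNIV) (\<lambda>z. penalized k h (fst z) (snd z))"
  unfolding penalized_def
  using lipschitz_on_continuous_on[OF lipschitz] assms Q_continuous A_continuous
  by (auto simp: case_prod_unfold intro!: continuous_intros continuous_on_comp_fst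
      intro: continuous_on_subset)

lemma continuous_on_value_along: "continuous_on {0..T} value_along"
proof -
  have "continuous_on {0..T} (\<lambda>t. penalized 0 (\<lambda>_. 0) (fst (t, Q t)) (snd (t, Q t)))"
    by (intro continuous_on_compose2[OF continuous_on_penalized])
      (auto intro!: continuous_intros Q_continuous)
  then show ?thesis by (simp add: value_along_def penalized_def)
qed

lemma penalized_le_value_along:
  assumes "t \<in> {0..T}"
  shows "penalized k h t y \<le> value_along t + C * \<bar>y - Q t\<bar> - (y - Q t)\<^sup>2 * k - h t"
  using U_lipschitz_in_x[OF assms, of y "Q t"] by (simp add: penalized_def value_along_def)

lemma penalized_le_value_along_young:
  assumes "t \<in> {0..T}" "k > 0"
  shows "penalized k h t y \<le> value_along t + C\<^sup>2 / (4 * k) - h t"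
  using penalized_le_value_along[OF assms(1), of k h y] young_quadratic[OF assms(2), of C "\<bar>y - Q t\<bar>"]
  by simp

lemma penalized_far_from_curve:
  assumes "t \<in> {0..T}" "1 \<le> k" "1 \<le> D" "C + D \<le> \<bar>y - Q t\<bar>"
  shows "penalized k h t y \<le> value_along t - D - h t"
proof -
  define r where "r = \<bar>y - Q t\<bar>"
  have "r * D \<le> r * (r - C)" using assms(4) by (intro mult_left_mono) (auto simp: r_def)
  moreover have "1 * D \<le> r * D" using assms(3,4) C_nonneg by (intro mult_right_mono) (auto simp: r_def)
  moreover have "r\<^sup>2 \<le> r\<^sup>2 * k" using mult_left_mono[OF assms(2), of "r\<^sup>2"] by simp
  ultimately have "C * r - r\<^sup>2 * k \<le> - D" by (simp add: power2_eq_square algebra_simps)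
  then show ?thesis using penalized_le_value_along[OF assms(1), of k h y] by (simp add: r_def)
qed

lemma penalized_max_near_curve:
  assumes "t \<in> {0..T}" "k > 0" "penalized k h t (Q t) \<le> penalized k h t y"
  shows "\<bar>y - Q t\<bar> * k \<le> C"
proof (cases "y = Q t")
  case False
  have "\<bar>y - Q t\<bar> * (\<bar>y - Q t\<bar> * k) = (y - Q t)\<^sup>2 * k" by (simp add: power2_eq_square)
  also have "\<dots> \<le> \<bar>y - Q t\<bar> * C"
    using assms(3) U_lipschitz_in_x[OF assms(1), of y "Q t"] by (simp add: penalized_def mult.commute)
  finally show ?thesis using False by simp
qed (use C_nonneg in simp)

lemma penalized_local_max_subsolution:
  assumes h: "\<And>t. (h has_real_derivative h' t) (at t)" "continuous_on UNIV h'"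
    and t0: "0 < t0" "t0 < T"
    and max: "\<exists>e>0. \<forall>s y. dist (s, y) (t0, y0) < e \<longrightarrow> penalized k h s y \<le> penalized k h t0 y0"
  shows "h' t0 + H y0 (2 * (y0 - Q t0) * k) - H (Q t0) (2 * (y0 - Q t0) * k) \<le> 0"
proof -
  define \<pi> where "\<pi> = 2 * (y0 - Q t0) * k"
  define \<phi> where "\<phi> s y = A s + (y - Q s)\<^sup>2 * k + h s" for s y
  define \<phi>t where "\<phi>t s y = A' s - 2 * (y - Q s) * Q' s * k + h' s" for s y
  define \<phi>x where "\<phi>x s y = 2 * (y - Q s) * k" for s y
  have t0': "t0 \<in> {0..T}" using t0 by simp
  have "C1_test \<phi> \<phi>t \<phi>x"
    unfolding \<phi>_def \<phi>t_def \<phi>x_def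
    by (rule C1_test_quadratic_penalty[OF A_deriv Q_deriv h(1) A'_cont Q'_cont h(2)])
  moreover have "\<exists>e>0. \<forall>s y. dist (s, y) (t0, y0) < e \<longrightarrow> U s y - \<phi> s y \<le> U t0 y0 - \<phi> t0 y0"
    using max by (simp add: penalized_def \<phi>_def diff_diff_eq)
  moreover have "t0 \<in> {0<..<T}" using t0 by simp
  ultimately have "\<phi>t t0 y0 + H y0 (\<phi>x t0 y0) \<le> 0"
    using sub unfolding visc_sub_def by blast
  then have "A' t0 - \<pi> * Q' t0 + h' t0 + H y0 \<pi> \<le> 0"
    by (simp add: \<phi>t_def \<phi>x_def \<pi>_def algebra_simps)
  \<comment> \<open>the tangent inequality at the momentum P t0 absorbs A' t0 - \<pi> Q' t0\<close>
  moreover have "H (Q t0) (P t0) + Q' t0 * (\<pi> - P t0) \<le> H (Q t0) \<pi>"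
    using Hamiltonian_above_tangent[OF C1 mono] Q'_eq[OF t0'] by simp
  ultimately show ?thesis
    using A'_eq[OF t0'] unfolding \<pi>_def by (simp add: algebra_simps)
qed

lemma penalized_interior_max_slope_bound:
  assumes h: "\<And>t. (h has_real_derivative h' t) (at t)" "continuous_on UNIV h'"
    and t0: "0 < t0" "t0 < T" and k: "1 \<le> k"
    and max: "\<exists>e>0. \<forall>s y. dist (s, y) (t0, y0) < e \<longrightarrow> penalized k h s y \<le> penalized k h t0 y0"
    and above_curve: "penalized k h t0 (Q t0) \<le> penalized k h t0 y0"
    and B: "\<bar>Q t0\<bar> \<le> B"
    and M: "\<And>x p. \<bar>x\<bar> \<le> B + C \<Longrightarrow> \<bar>p\<bar> \<le> 2 * C \<Longrightarrow> \<bar>pd1 H x p\<bar> \<le> M"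
  shows "h' t0 * k \<le> M * C"
proof -
  define x0 \<pi> where "x0 = Q t0" and "\<pi> = 2 * (y0 - Q t0) * k"
  have close: "\<bar>y0 - x0\<bar> * k \<le> C"
    using penalized_max_near_curve[OF _ _ above_curve] t0 k by (simp add: x0_def)
  then have "\<bar>y0 - x0\<bar> \<le> C"
    using mult_left_mono[OF k, of "\<bar>y0 - x0\<bar>"] by simp
  moreover have "\<bar>\<pi>\<bar> \<le> 2 * C"
  proof -
    have "\<bar>\<pi>\<bar> = 2 * (\<bar>y0 - x0\<bar> * k)" unfolding \<pi>_def x0_def abs_mult using k by simp
    then show ?thesis using close by linarith
  qed
  ultimately have "\<bar>H y0 \<pi> - H x0 \<pi>\<bar> \<le> M * \<bar>y0 - x0\<bar>"
    using B M by (intro lipschitz_in_x_of_bounded_pd1[OF C1, of "- (B + C)" "B + C"]) (auto simp: x0_def)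
  moreover have "h' t0 + H y0 \<pi> - H x0 \<pi> \<le> 0"
    using penalized_local_max_subsolution[OF h t0 max] by (simp add: x0_def \<pi>_def)
  ultimately have "h' t0 * k \<le> M * \<bar>y0 - x0\<bar> * k"
    using k by (intro mult_right_mono) auto
  also have "\<dots> \<le> M * C"
    using close M[of x0 0] B C_nonneg by (simp add: mult.assoc mult_left_mono x0_def)
  finally show ?thesis .
qed

lemma bounds_near_curve:
  obtains B M where "\<And>t. t \<in> {0..T} \<Longrightarrow> \<bar>Q t\<bar> \<le> B"
    "\<And>x p. \<bar>x\<bar> \<le> B + C \<Longrightarrow> \<bar>p\<bar> \<le> 2 * C \<Longrightarrow> \<bar>pd1 H x p\<bar> \<le> M" "0 \<le> M"
proof -
  obtain B where B: "\<And>t. t \<in> {0..T} \<Longrightarrow> \<bar>Q t\<bar> \<le> B"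
    using continuous_on_compact_bound[OF compact_Icc Q_continuous] by (metis real_norm_def)
  obtain M where "\<And>z. z \<in> {-(B+C)..B+C} \<times> {-(2*C)..2*C} \<Longrightarrow> \<bar>(\<lambda>(x, p). pd1 H x p) z\<bar> \<le> M"
    using continuous_on_compact_bound[OF compact_Times[OF compact_Icc compact_Icc]
        continuous_on_subset[OF Ck2_1_pd1_continuous[OF C1] subset_UNIV]]
    by (metis real_norm_def)
  then have M: "\<bar>pd1 H x p\<bar> \<le> M" if "\<bar>x\<bar> \<le> B + C" "\<bar>p\<bar> \<le> 2 * C" for x p
    using that by (force simp: abs_le_iff)
  have "0 \<le> B" using B[of 0] T by force
  then have "0 \<le> M" using M[of 0 0] C_nonneg by force
  with B M show ?thesis using that by blast
qed

lemma penalized_interior_max_exists: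
  assumes h: "continuous_on UNIV h" and b: "0 < b" "b < T" and k: "1 \<le> k" and D: "1 \<le> D"
    and below_0: "\<And>y. penalized k h 0 y < penalized k h b (Q b)"
    and below_T: "\<And>y. penalized k h T y < penalized k h b (Q b)"
    and below_far: "\<And>t. t \<in> {0..T} \<Longrightarrow> value_along t - D - h t < penalized k h b (Q b)"
  obtains t0 y0 where "0 < t0" "t0 < T"
    "\<exists>e>0. \<forall>s y. dist (s, y) (t0, y0) < e \<longrightarrow> penalized k h s y \<le> penalized k h t0 y0"
    "penalized k h t0 (Q t0) \<le> penalized k h t0 y0"
proof -
  obtain B where B: "\<And>t. t \<in> {0..T} \<Longrightarrow> \<bar>Q t\<bar> \<le> B"
    using continuous_on_compact_bound[OF compact_Icc Q_continuous] by (metis real_norm_def)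
  define R where "R = B + C + D"
  define S where "S = {0..T} \<times> {-R..R}"
  have in_S: "(t, Q t) \<in> S" if "t \<in> {0..T}" for t
    using that B[OF that] C_nonneg D by (auto simp: S_def R_def)
  have "compact S" by (simp add: S_def compact_Times)
  moreover have "continuous_on S (\<lambda>z. penalized k h (fst z) (snd z))"
    by (rule continuous_on_subset[OF continuous_on_penalized[OF h]]) (auto simp: S_def)
  ultimately have "\<exists>z\<in>S. \<forall>z'\<in>S. penalized k h (fst z') (snd z') \<le> penalized k h (fst z) (snd z)"
    using in_S[of b] b by (intro continuous_attains_sup) auto
  then obtain t0 y0 where max_S: "(t0, y0) \<in> S"
    "\<And>z. z \<in> S \<Longrightarrow> penalized k h (fst z) (snd z) \<le> penalized k h t0 y0"
    by fastforce
  then have t0: "t0 \<in> {0..T}" and "\<bar>y0\<bar> \<le> R" by (auto simp: S_def)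
  have above_b: "penalized k h b (Q b) \<le> penalized k h t0 y0"
    using max_S(2)[OF in_S] b by fastforce
  have "t0 \<noteq> 0" "t0 \<noteq> T"
    using below_0[of y0] below_T[of y0] above_b by auto
  with t0 have "0 < t0" "t0 < T" by auto
  moreover have "\<bar>y0\<bar> < R"
  proof (rule ccontr)
    assume "\<not> \<bar>y0\<bar> < R"
    then have "C + D \<le> \<bar>y0 - Q t0\<bar>" using B[OF t0] by (simp add: R_def)
    from penalized_far_from_curve[OF t0 k D this, of h] show False
      using below_far[OF t0] above_b by linarith
  qed
  ultimately have "(t0, y0) \<in> {0<..<T} \<times> {-R<..<R}" by auto
  moreover have "open ({0<..<T} \<times> {-R<..<R})" by (intro open_Times open_greaterThanLessThan)
  ultimately obtain e where "e > 0" "ball (t0, y0) e \<subseteq> {0<..<T} \<times> {-R<..<R}"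
    using openE by blast
  moreover have "(s, y) \<in> S" if "(s, y) \<in> {0<..<T} \<times> {-R<..<R}" for s y
    using that by (auto simp: S_def)
  ultimately have "\<exists>e>0. \<forall>s y. dist (s, y) (t0, y0) < e \<longrightarrow> penalized k h s y \<le> penalized k h t0 y0"
    using max_S(2) by (metis dist_commute fst_conv mem_ball snd_conv subsetD)
  moreover have "penalized k h t0 (Q t0) \<le> penalized k h t0 y0"
    using max_S(2)[OF in_S[OF t0]] by simp
  ultimately show ?thesis using that \<open>0 < t0\<close> \<open>t0 < T\<close> by blast
qed

lemma value_along_le_initial:
  assumes b: "0 < b" "b < T"
  shows "value_along b \<le> value_along 0"
proof (rule ccontr)
  assume "\<not> value_along b \<le> value_along 0"
  define m where "m = value_along b - value_along 0"
  have m: "m > 0" using \<open>\<not> value_along b \<le> value_along 0\<close> by (simp add: m_def)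
  obtain B M where B: "\<And>t. t \<in> {0..T} \<Longrightarrow> \<bar>Q t\<bar> \<le> B"
    and M: "\<And>x p. \<bar>x\<bar> \<le> B + C \<Longrightarrow> \<bar>p\<bar> \<le> 2 * C \<Longrightarrow> \<bar>pd1 H x p\<bar> \<le> M" and "0 \<le> M"
    using bounds_near_curve by blast
  obtain G where G: "\<And>t. t \<in> {0..T} \<Longrightarrow> \<bar>value_along t\<bar> \<le> G"
    using continuous_on_compact_bound[OF compact_Icc continuous_on_value_along] by (metis real_norm_def)
  have "m / 2 > 0" using m by simp
  then obtain h h' \<mu> where h: "\<And>t. (h has_real_derivative h' t) (at t)" "continuous_on UNIV h'"
    and h_b: "h b = 0" and h_ge: "\<And>t. - (m / 2) \<le> h t" and h_T: "2 * G + C\<^sup>2 + 1 \<le> h T"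
    and \<mu>: "\<mu> > 0" "\<And>t. 0 \<le> t \<Longrightarrow> \<mu> \<le> h' t"
    using exponential_barrier[OF _ b(2), of "m / 2" "2 * G + C\<^sup>2 + 1"] by blast
  have h_cont: "continuous_on UNIV h"
    using h(1) by (meson DERIV_continuous_on has_field_derivative_at_within)
  obtain k where k: "1 \<le> k" and young_small: "C\<^sup>2 / (4 * k) < m / 2"
    and slope_large: "M * C < \<mu> * k"
    using penalty_weight_exists[OF C_nonneg \<open>0 \<le> M\<close> m \<mu>(1)] by blast
  have young_le: "C\<^sup>2 / (4 * k) \<le> C\<^sup>2 / 1" using k by (intro divide_left_mono) auto
  have at_b: "penalized k h b (Q b) = value_along b"
    by (simp add: penalized_def value_along_def h_b)
  have G_b: "- G \<le> value_along b" using G[of b] b by force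
  obtain t0 y0 where t0: "0 < t0" "t0 < T"
    and max: "\<exists>e>0. \<forall>s y. dist (s, y) (t0, y0) < e \<longrightarrow> penalized k h s y \<le> penalized k h t0 y0"
    and above_curve: "penalized k h t0 (Q t0) \<le> penalized k h t0 y0"
  proof (rule penalized_interior_max_exists[OF h_cont b k, of "2 * G + m + 1"])
    show "1 \<le> 2 * G + m + 1" using G[of 0] T m by force
    show "penalized k h 0 y < penalized k h b (Q b)" for y
    proof -
      have "penalized k h 0 y \<le> value_along 0 + C\<^sup>2 / (4 * k) - h 0"
        using T k by (intro penalized_le_value_along_young) auto
      then show ?thesis using h_ge[of 0] young_small at_b m_def by linarith
    qed
    show "penalized k h T y < penalized k h b (Q b)" for y
    proof -
      have "penalized k h T y \<le> value_along T + C\<^sup>2 / (4 * k) - h T"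
        using T k by (intro penalized_le_value_along_young) auto
      then show ?thesis using h_T young_le G[of T] G_b at_b T by force
    qed
    show "value_along t - (2 * G + m + 1) - h t < penalized k h b (Q b)" if "t \<in> {0..T}" for t
      using G[OF that] h_ge[of t] G_b at_b m by (simp add: abs_le_iff)
  qed
  have "\<mu> * k \<le> h' t0 * k" using \<mu>(2)[of t0] t0 k by (intro mult_right_mono) auto
  also have "\<dots> \<le> M * C"
    using penalized_interior_max_slope_bound[OF h t0 k max above_curve] B[of t0] t0 M by simp
  finally show False using slope_large by simp
qed

lemma value_along_final_le_initial: "value_along T \<le> value_along 0"
proof -
  have "closure {0<..<T} = {0..T}" using T by simp
  then show ?thesis
    using continuous_le_on_closure[of "{0<..<T}" value_along T "value_along 0"]
      continuous_on_value_along value_along_le_initial T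
    by auto
qed

end
lemma action_inequality_for_subsolution:
  fixes H U :: "real \<Rightarrow> real \<Rightarrow> real" and q p :: "real \<Rightarrow> real"
  assumes C1: "Ck2 1 H" and mono: "\<And>x. mono (pd2 H x)" and T: "T > 0"
    and lipschitz: "C-lipschitz_on ({0..T} \<times> UNIV) (\<lambda>(t, x). U t x)"
    and sub: "visc_sub H T U"
    and q: "\<And>t. t \<in> {0..T} \<Longrightarrow> (q has_real_derivative pd2 H (q t) (p t)) (at t within {0..T})"
    and p: "continuous_on {0..T} p"
  shows "U T (q T) - integral {0..T} (\<lambda>t. Lag H (q t) (pd2 H (q t) (p t))) \<le> U 0 (q 0)"
proof -
  define v where "v t = pd2 H (q t) (p t)" for t
  define l where "l t = p t * v t - H (q t) (p t)" for t
  have "continuous_on {0..T} q" using q by (intro DERIV_continuous_on) auto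
  then have v_cont: "continuous_on {0..T} v" and l_cont: "continuous_on {0..T} l"
    unfolding v_def l_def using p
    by (auto intro!: continuous_intros
        continuous_on_compose2[OF Ck2_1_pd2_continuous[OF C1], of _ "\<lambda>t. (q t, p t)", simplified]
        continuous_on_compose2[OF Ck2_1_continuous[OF C1], of _ "\<lambda>t. (q t, p t)", simplified])
  define \<Lambda> where "\<Lambda> = (\<lambda>t. integral {0..t} l)"
  have \<Lambda>: "(\<Lambda> has_real_derivative l t) (at t within {0..T})" if "t \<in> {0..T}" for t
    using integral_has_vector_derivative[OF l_cont that]
    by (simp add: \<Lambda>_def has_real_derivative_iff_has_vector_derivative)
  obtain Q Q' where "\<And>t. (Q has_real_derivative Q' t) (at t)" "continuous_on UNIV Q'"
    and Q: "\<And>t. t \<in> {0..T} \<Longrightarrow> Q t = q t \<and> Q' t = v t"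
    using C1_extension_from_interval[of T q v] T q v_cont by (auto simp: v_def)
  moreover obtain A A' where "\<And>t. (A has_real_derivative A' t) (at t)" "continuous_on UNIV A'"
    and A: "\<And>t. t \<in> {0..T} \<Longrightarrow> A t = \<Lambda> t \<and> A' t = l t"
    using C1_extension_from_interval[of T \<Lambda> l] T \<Lambda> l_cont by auto
  ultimately interpret subsolution_along_characteristic H T C U Q Q' A A' p
    using C1 mono T lipschitz sub by unfold_locales (auto simp: v_def l_def)
  have "U T (q T) - \<Lambda> T \<le> U 0 (q 0) - \<Lambda> 0"
    using value_along_final_le_initial Q[of 0] Q[of T] A[of 0] A[of T] T by (simp add: value_along_def)
  moreover have "\<Lambda> T = integral {0..T} (\<lambda>t. Lag H (q t) (pd2 H (q t) (p t)))"
    unfolding \<Lambda>_def l_def v_def using Lag_pd2[OF C1 mono] by simp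
  ultimately show ?thesis by (simp add: \<Lambda>_def)
qed

theorem lemma5p7:
  fixes H :: "real \<Rightarrow> real \<Rightarrow> real" and T :: real and W :: "real \<Rightarrow> real"
  assumes "C3 H" and "CNH H" and "CVX H"
    and "T > 0"
    and "\<exists>C. C-lipschitz_on UNIV W"
    and "IHJ H T W \<noteq> {}"
  shows "\<forall>Uo\<in>IHJ H T W. \<forall>x. ereal (Uo x) \<ge> Ustar H T W x"
proof (intro ballI allI)
  fix Uo x assume "Uo \<in> IHJ H T W"
  then obtain U C where lipschitz: "C-lipschitz_on ({0..T} \<times> UNIV) (\<lambda>(t, x). U t x)"
    and sub: "visc_sub H T U" and "U 0 = Uo" "U T = W"
    unfolding IHJ_def visc_sol_def by blast
  have mono: "mono (pd2 H y)" for y using assms(3) by (simp add: CVX_def Let_def)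
  show "Ustar H T W x \<le> ereal (Uo x)"
    unfolding Ustar_def
  proof (rule SUP_least)
    fix q assume "q \<in> {q \<in> RT H T. q 0 = x}"
    then obtain p where "q 0 = x" and "C1_on T p"
      and q: "\<And>t. t \<in> {0..T} \<Longrightarrow> (q has_real_derivative pd2 H (q t) (p t)) (at t within {0..T})"
      unfolding RT_def by blast
    then have "continuous_on {0..T} p"
      unfolding C1_on_def by (metis DERIV_continuous_on)
    have "vector_derivative q (at t within {0..T}) = pd2 H (q t) (p t)" if "t \<in> {0..T}" for t
      using q[OF that] that assms(4)
      by (intro vector_derivative_within_closed_interval)
        (auto simp: has_real_derivative_iff_has_vector_derivative)
    then have "action H T q = integral {0..T} (\<lambda>t. Lag H (q t) (pd2 H (q t) (p t)))"
      unfolding action_def by (intro integral_cong) simp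
    then show "ereal (W (q T) - action H T q) \<le> ereal (Uo x)"
      using action_inequality_for_subsolution[OF C3_imp_Ck2_1[OF assms(1)] mono assms(4)
          lipschitz sub q \<open>continuous_on {0..T} p\<close>] \<open>U 0 = Uo\<close> \<open>U T = W\<close> \<open>q 0 = x\<close>
      by simp
  qed
qed

end
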